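(* Let $r=\frac{1}{2\pi}$ and let $F$ be the regular $500$-gon with vertices $\bigl(r\cos\frac{k\pi}{250}, r\sin\frac{k\pi}{250}\bigr)$, $k=0,\dots,499$. For $z=(x_1,y_1,x_2,y_2,\theta)\in\mathbb{R}^5$ let $R(z)$ be the closed rectangle with sides parallel to the coordinate axes, center $(x_1,y_1)$, horizontal side length $0.4625$ and vertical side length $0.0375$, and let $T(z)$ be the closed equilateral triangle with vertices $\bigl(x_2+\frac{\sqrt3}{9}\cos(\theta+\frac{2\pi j}{3}),\, y_2+\frac{\sqrt3}{9}\sin(\theta+\frac{2\pi j}{3})\bigr)$, $j=0,1,2$ (side length $\frac13$). Let $f(z)$ be the area of the convex hull of $F\cup R(z)\cup T(z)$. Then $f$ is a convex function of each of the coordinates $x_1$, $y_1$, $x_2$, $y_2$ separately (with the other four coordinates fixed). *)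

theory Defs
  imports "HOL-Analysis.Analysis"
begin

definition rad :: real where "rad = 1 / (2 * pi)"

definition polygonF :: "(real \<times> real) set" where
  "polygonF = convex hull {(rad * cos (real k * pi / 250), rad * sin (real k * pi / 250)) | k::nat. k < 500}"

definition rectR :: "real \<Rightarrow> real \<Rightarrow> (real \<times> real) set" where
  "rectR x1 y1 = {x1 - 0.4625 / 2 .. x1 + 0.4625 / 2} \<times> {y1 - 0.0375 / 2 .. y1 + 0.0375 / 2}"

definition triT :: "real \<Rightarrow> real \<Rightarrow> real \<Rightarrow> (real \<times> real) set" where
  "triT x2 y2 \<theta> = convex hull
     {(x2 + sqrt 3 / 9 * cos (\<theta> + 2 * pi * real j / 3),
       y2 + sqrt 3 / 9 * sin (\<theta> + 2 * pi * real j / 3)) | j::nat. j < 3}"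

definition areaf :: "real \<Rightarrow> real \<Rightarrow> real \<Rightarrow> real \<Rightarrow> real \<Rightarrow> real" where
  "areaf x1 y1 x2 y2 \<theta> =
     measure lebesgue (convex hull (polygonF \<union> rectR x1 y1 \<union> triT x2 y2 \<theta>))"

end

theory Submission
  imports Defs
begin

text \<open>Translate one of two compact sets vertically by \<open>t\<close>. Every point of the convex hull of
  \<open>A \<union> (B + (0, t))\<close> has the form \<open>p + (0, v t)\<close> with \<open>(p, v)\<close> ranging over a compact set that does
  not depend on \<open>t\<close>, so each vertical section is a set whose points move linearly in \<open>t\<close>. The
  section is a compact interval, its length is its diameter, and the diameter of a set of linearly
  moving points is a convex function of \<open>t\<close>. By Cavalieri's principle the area, the integral of the
  section lengths, is convex as well. Horizontal translations reduce to vertical ones by exchanging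
  the coordinates, and moving the centre of the rectangle or of the triangle is such a translation.\<close>

lemma
  fixes K :: "('a::real_normed_vector \<times> 'b::real_normed_vector) set"
  shows convex_vimage_Pair: "convex K \<Longrightarrow> convex (Pair x -` K)"
    and compact_vimage_Pair: "compact K \<Longrightarrow> compact (Pair x -` K)"
proof -
  have Pair_vimage: "Pair x -` K = snd ` (K \<inter> {x} \<times> UNIV)"
    by force
  show "convex K \<Longrightarrow> convex (Pair x -` K)"
    unfolding Pair_vimage by (intro convex_linear_image convex_Int convex_Times) (auto simp: linear_snd)
  show "compact K \<Longrightarrow> compact (Pair x -` K)"
    unfolding Pair_vimage
    by (intro compact_continuous_image continuous_intros compact_Int_closed closed_Times) auto
qed

lemma measure_lborel_eq_diameter:
  fixes S :: "real set"
  assumes "compact S" "connected S"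
  shows "measure lborel S = diameter S"
proof -
  obtain a b where "S = {a..b}"
    using assms connected_compact_interval_1 by blast
  then show ?thesis by simp
qed

lemma convex_on_diameter_linear_motion:
  fixes E :: "('a::real_normed_vector \<times> 'a) set"
  assumes "bounded E"
  shows "convex_on UNIV (\<lambda>t. diameter ((\<lambda>(p, v). p + t *\<^sub>R v) ` E))"
proof (rule convex_onI)
  let ?S = "\<lambda>t. (\<lambda>(p, v). p + t *\<^sub>R v) ` E"
  have bounded: "bounded (?S t)" for t
  proof -
    have "?S t = (\<lambda>z. fst z + t *\<^sub>R snd z) ` E"
      by (simp add: case_prod_beta')
    also have "bounded \<dots>"
      by (intro bounded_linear_image assms bounded_linear_add bounded_linear_fst
          bounded_linear_compose[OF bounded_linear_scaleR_right bounded_linear_snd])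
    finally show ?thesis .
  qed
  fix \<mu> s t :: real
  assume \<mu>: "0 < \<mu>" "\<mu> < 1"
  let ?m = "(1 - \<mu>) *\<^sub>R s + \<mu> *\<^sub>R t"
  let ?bound = "(1 - \<mu>) * diameter (?S s) + \<mu> * diameter (?S t)"
  show "diameter (?S ?m) \<le> ?bound"
  proof (rule diameter_le)
    show "?S ?m \<noteq> {} \<or> 0 \<le> ?bound"
      using \<mu> bounded by (simp add: diameter_ge_0)
    fix x y
    assume "x \<in> ?S ?m" "y \<in> ?S ?m"
    then obtain p v q w where E: "(p, v) \<in> E" "(q, w) \<in> E"
      and x: "x = p + ?m *\<^sub>R v" and y: "y = q + ?m *\<^sub>R w"
      by auto
    have "x - y = (1 - \<mu>) *\<^sub>R ((p + s *\<^sub>R v) - (q + s *\<^sub>R w))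
        + \<mu> *\<^sub>R ((p + t *\<^sub>R v) - (q + t *\<^sub>R w))"
      by (simp add: x y algebra_simps)
    then have "norm (x - y)
        \<le> (1 - \<mu>) * dist (p + s *\<^sub>R v) (q + s *\<^sub>R w) + \<mu> * dist (p + t *\<^sub>R v) (q + t *\<^sub>R w)"
      using \<mu> norm_triangle_ineq[of "(1 - \<mu>) *\<^sub>R _" "\<mu> *\<^sub>R _"] by (simp add: dist_norm)
    also have "\<dots> \<le> ?bound"
      using \<mu> E by (intro add_mono mult_left_mono diameter_bounded_bound bounded) force+
    finally show "norm (x - y) \<le> ?bound" .
  qed
qed simp

lemma
  fixes C :: "(real \<times> real) set"
  assumes "compact C"
  shows measure_eq_nn_integral_sections:
      "ennreal (measure lebesgue C) = (\<integral>\<^sup>+x. ennreal (measure lborel (Pair x -` C)) \<partial>lborel)"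
    and borel_measurable_measure_sections:
      "(\<lambda>x. ennreal (measure lborel (Pair x -` C))) \<in> borel_measurable lborel"
proof -
  have borel: "C \<in> sets lborel"
    by (simp add: borel_compact assms)
  then have borel_pair: "C \<in> sets (lborel \<Otimes>\<^sub>M lborel)"
    by (simp only: lborel_prod)
  have emeasure_slice: "emeasure lborel (Pair x -` C) = ennreal (measure lborel (Pair x -` C))" for x
  proof -
    have "Pair x -` C \<subseteq> snd ` C"
      by force
    then have "bounded (Pair x -` C)"
      by (metis bounded_snd bounded_subset assms compact_imp_bounded)
    from emeasure_bounded_finite[OF this] show ?thesis
      by (intro emeasure_eq_ennreal_measure) auto
  qed
  have "emeasure lborel C = ennreal (measure lebesgue C)"
    using borel emeasure_compact_finite[OF assms] by (simp add: emeasure_eq_ennreal_measure less_top)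
  then show "ennreal (measure lebesgue C) = (\<integral>\<^sup>+x. ennreal (measure lborel (Pair x -` C)) \<partial>lborel)"
    using lborel.emeasure_pair_measure_alt[OF borel_pair] by (simp add: lborel_prod emeasure_slice)
  show "(\<lambda>x. ennreal (measure lborel (Pair x -` C))) \<in> borel_measurable lborel"
    using lborel.measurable_emeasure_Pair[OF borel_pair] by (simp add: emeasure_slice)
qed

lemma convex_on_measure_if_convex_on_sections:
  fixes C :: "real \<Rightarrow> (real \<times> real) set"
  assumes compact: "\<And>t. compact (C t)"
    and sections: "\<And>x. convex_on UNIV (\<lambda>t. measure lborel (Pair x -` C t))"
  shows "convex_on UNIV (\<lambda>t. measure lebesgue (C t))"
proof (rule convex_onI)
  let ?len = "\<lambda>t x. measure lborel (Pair x -` C t)"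
  note area = measure_eq_nn_integral_sections[OF compact]
  note measurable = borel_measurable_measure_sections[OF compact]
  fix \<mu> a b :: real
  assume \<mu>: "0 < \<mu>" "\<mu> < 1"
  have "ennreal (measure lebesgue (C ((1 - \<mu>) *\<^sub>R a + \<mu> *\<^sub>R b)))
      \<le> (\<integral>\<^sup>+x. ennreal ((1 - \<mu>) * ?len a x + \<mu> * ?len b x) \<partial>lborel)"
    unfolding area using \<mu> by (intro nn_integral_mono ennreal_leI convex_onD[OF sections]) auto
  also have "\<dots> = (\<integral>\<^sup>+x. ennreal (1 - \<mu>) * ennreal (?len a x) + ennreal \<mu> * ennreal (?len b x)
      \<partial>lborel)"
    using \<mu> by (intro nn_integral_cong) (simp add: ennreal_plus ennreal_mult measure_nonneg)
  also have "\<dots> = ennreal ((1 - \<mu>) * measure lebesgue (C a) + \<mu> * measure lebesgue (C b))"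
    using \<mu> measurable by (simp add: nn_integral_add nn_integral_cmult area ennreal_plus ennreal_mult)
  finally show "measure lebesgue (C ((1 - \<mu>) *\<^sub>R a + \<mu> *\<^sub>R b))
      \<le> (1 - \<mu>) * measure lebesgue (C a) + \<mu> * measure lebesgue (C b)"
    using \<mu> by (subst (asm) ennreal_le_iff) auto
qed simp

lemma convex_on_measure_vertical_shear:
  fixes D :: "((real \<times> real) \<times> real) set"
  defines "C \<equiv> \<lambda>t. (\<lambda>(p, v). p + v *\<^sub>R (0, t)) ` D"
  assumes "compact D" and convex: "\<And>t. convex (C t)"
  shows "convex_on UNIV (\<lambda>t. measure lebesgue (C t))"
proof (rule convex_on_measure_if_convex_on_sections)
  show compact: "compact (C t)" for t
    unfolding C_def using \<open>compact D\<close>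
    by (intro compact_continuous_image) (auto simp: case_prod_beta' intro!: continuous_intros)
  fix x
  define E where "E = {(y, v). ((x, y), v) \<in> D}"
  have slice: "Pair x -` C t = (\<lambda>(y, v). y + t *\<^sub>R v) ` E" for t
    by (force simp: C_def E_def image_iff)
  have "E \<subseteq> (\<lambda>((x, y), v). (y, v)) ` D"
    by (force simp: E_def)
  moreover have "compact ((\<lambda>((x, y), v). (y, v)) ` D)"
    using \<open>compact D\<close>
    by (intro compact_continuous_image) (auto simp: case_prod_beta' intro!: continuous_intros)
  ultimately have "bounded E"
    by (meson bounded_subset compact_imp_bounded)
  moreover have "measure lborel (Pair x -` C t) = diameter (Pair x -` C t)" for t
    by (intro measure_lborel_eq_diameter compact_vimage_Pair convex_connected convex_vimage_Pair
        compact convex)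
  ultimately show "convex_on UNIV (\<lambda>t. measure lborel (Pair x -` C t))"
    using convex_on_diameter_linear_motion[of E] by (simp add: slice)
qed

lemma convex_hull_Un_translation:
  fixes A B :: "'a::euclidean_space set"
  assumes "A \<noteq> {}" "B \<noteq> {}"
  shows "convex hull (A \<union> (\<lambda>p. p + c) ` B) =
    (\<lambda>((a, b), v). (1 - v) *\<^sub>R a + v *\<^sub>R b + v *\<^sub>R c) `
      (((convex hull A) \<times> (convex hull B)) \<times> {0..1})"
    (is "_ = ?R")
proof -
  have translate: "convex hull ((\<lambda>p. p + c) ` B) = (\<lambda>p. p + c) ` (convex hull B)"
    using convex_hull_translation[of c B] by (simp add: add.commute)
  have "convex hull (A \<union> (\<lambda>p. p + c) ` B)
      = convex hull (convex hull A \<union> (\<lambda>p. p + c) ` (convex hull B))"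
    by (metis hull_Un_left hull_Un_right translate)
  also have "\<dots> = {u *\<^sub>R a + v *\<^sub>R q | u v a q.
      u \<ge> 0 \<and> v \<ge> 0 \<and> u + v = 1 \<and> a \<in> convex hull A \<and> q \<in> (\<lambda>p. p + c) ` (convex hull B)}"
    (is "_ = ?M")
    using assms by (intro convex_hull_union_two) (auto simp: translate[symmetric])
  also have "?M = ?R"
  proof (intro equalityI subsetI)
    fix z
    assume "z \<in> ?M"
    then obtain u v a b where "z = u *\<^sub>R a + v *\<^sub>R (b + c)" "u + v = 1" "0 \<le> u" "0 \<le> v"
      "a \<in> convex hull A" "b \<in> convex hull B"
      by blast
    then show "z \<in> ?R"
      by (intro image_eqI[of _ _ "((a, b), v)"]) (auto simp: scaleR_add_right eq_diff_eq)
  next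
    fix z
    assume "z \<in> ?R"
    then obtain a b v where "z = (1 - v) *\<^sub>R a + v *\<^sub>R b + v *\<^sub>R c" "0 \<le> v" "v \<le> 1"
      "a \<in> convex hull A" "b \<in> convex hull B"
      by auto
    then show "z \<in> ?M"
      by (intro CollectI exI[of _ "1 - v"] exI[of _ v] exI[of _ a] exI[of _ "b + c"])
        (auto simp: scaleR_add_right)
  qed
  finally show ?thesis .
qed

lemma convex_on_measure_hull_Un_vertical_shift:
  fixes A B :: "(real \<times> real) set"
  assumes "compact A" "A \<noteq> {}" "compact B" "B \<noteq> {}"
  shows "convex_on UNIV (\<lambda>t. measure lebesgue (convex hull (A \<union> (\<lambda>p. p + (0, t)) ` B)))"
proof -
  define D where "D = (\<lambda>((a, b), v). ((1 - v) *\<^sub>R a + v *\<^sub>R b, v)) `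
    (((convex hull A) \<times> (convex hull B)) \<times> {0..1::real})"
  have hull: "convex hull (A \<union> (\<lambda>p. p + (0, t)) ` B) = (\<lambda>(p, v). p + v *\<^sub>R (0, t)) ` D" for t
    unfolding D_def convex_hull_Un_translation[OF \<open>A \<noteq> {}\<close> \<open>B \<noteq> {}\<close>] image_image
    by (simp add: case_prod_beta')
  have "compact D"
    unfolding D_def using assms
    by (intro compact_continuous_image compact_Times compact_convex_hull compact_Icc)
      (auto simp: case_prod_beta' intro!: continuous_intros)
  moreover have "convex ((\<lambda>(p, v). p + v *\<^sub>R (0, t)) ` D)" for t
    unfolding hull[symmetric] by simp
  ultimately show ?thesis
    unfolding hull by (rule convex_on_measure_vertical_shear)
qed

lemma measure_lebesgue_swap_image:
  fixes S :: "(real \<times> real) set"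
  assumes "S \<in> sets lborel"
  shows "measure lebesgue (prod.swap ` S) = measure lebesgue S"
proof -
  have S: "S \<in> sets (lborel \<Otimes>\<^sub>M lborel)"
    using assms by (simp only: lborel_prod)
  have swap: "prod.swap ` S = prod.swap -` S"
    by force
  have swap_sets: "prod.swap ` S \<in> sets (lborel \<Otimes>\<^sub>M lborel)"
    unfolding swap using measurable_sets[OF measurable_pair_swap' S]
    by (simp add: space_pair_measure prod.swap_def[abs_def] split_beta')
  have "emeasure lborel (prod.swap ` S) = (\<integral>\<^sup>+x. emeasure lborel ((\<lambda>y. (y, x)) -` S) \<partial>lborel)"
    using lborel.emeasure_pair_measure_alt[OF swap_sets] by (simp add: lborel_prod swap vimage_def)
  also have "\<dots> = emeasure lborel S"
    using lborel_pair.emeasure_pair_measure_alt2[OF S] by (simp add: lborel_prod)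
  finally show ?thesis
    using assms swap_sets[unfolded lborel_prod] by (simp add: measure_def)
qed

lemma convex_on_measure_hull_Un_horizontal_shift:
  fixes A B :: "(real \<times> real) set"
  assumes "compact A" "A \<noteq> {}" "compact B" "B \<noteq> {}"
  shows "convex_on UNIV (\<lambda>t. measure lebesgue (convex hull (A \<union> (\<lambda>p. p + (t, 0)) ` B)))"
proof -
  have swap: "measure lebesgue (convex hull (A \<union> (\<lambda>p. p + (t, 0)) ` B)) =
      measure lebesgue (convex hull (prod.swap ` A \<union> (\<lambda>p. p + (0, t)) ` prod.swap ` B))" for t
  proof -
    have "compact (convex hull (A \<union> (\<lambda>p. p + (t, 0)) ` B))"
      using assms by (intro compact_convex_hull compact_Un compact_continuous_image continuous_intros)
    then have "measure lebesgue (convex hull (A \<union> (\<lambda>p. p + (t, 0)) ` B)) =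
        measure lebesgue (prod.swap ` (convex hull (A \<union> (\<lambda>p. p + (t, 0)) ` B)))"
      by (simp add: measure_lebesgue_swap_image borel_compact)
    also have "prod.swap ` (convex hull (A \<union> (\<lambda>p. p + (t, 0)) ` B)) =
        convex hull (prod.swap ` A \<union> (\<lambda>p. p + (0, t)) ` prod.swap ` B)"
    proof -
      have "prod.swap (p + (t, 0)) = prod.swap p + (0, t)" for p :: "real \<times> real"
        by (simp add: prod_eq_iff)
      then show ?thesis
        by (subst convex_hull_linear_image) (simp_all add: linear_iff image_Un image_image)
    qed
    finally show ?thesis .
  qed
  show ?thesis
    unfolding swap using assms
    by (intro convex_on_measure_hull_Un_vertical_shift)
      (auto intro: compact_continuous_image continuous_intros)
qed

lemma rectR_translate: "rectR (x + a) (y + b) = (\<lambda>p. p + (a, b)) ` rectR x y"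
proof -
  have "(\<lambda>p. p + (a, b)) = map_prod ((+) a) ((+) b)"
    by (auto simp: fun_eq_iff add.commute)
  then show ?thesis
    unfolding rectR_def by (simp only: map_prod_image) (simp add: algebra_simps)
qed

lemma triT_translate: "triT (x + a) (y + b) \<theta> = (\<lambda>p. p + (a, b)) ` triT x y \<theta>"
proof -
  let ?V = "\<lambda>x y. {(x + sqrt 3 / 9 * cos (\<theta> + 2 * pi * real j / 3),
     y + sqrt 3 / 9 * sin (\<theta> + 2 * pi * real j / 3)) | j::nat. j < 3}"
  have "?V (x + a) (y + b) = (\<lambda>p. (a, b) + p) ` ?V x y"
    by (auto simp: image_iff algebra_simps)
  moreover have "(\<lambda>p. p + (a, b)) = (\<lambda>p. (a, b) + p)"
    by (simp add: fun_eq_iff add.commute)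
  ultimately show ?thesis
    unfolding triT_def by (simp only: convex_hull_translation)
qed

lemma compact_polygonF: "compact polygonF" and polygonF_nonempty: "polygonF \<noteq> {}"
  unfolding polygonF_def
  by (auto intro!: finite_imp_compact_convex_hull finite_image_set intro: exI[of _ "0::nat"])

lemma compact_rectR: "compact (rectR x y)" and rectR_nonempty: "rectR x y \<noteq> {}"
  unfolding rectR_def by (auto intro: compact_Times)

lemma compact_triT: "compact (triT x y \<theta>)" and triT_nonempty: "triT x y \<theta> \<noteq> {}"
  unfolding triT_def
  by (auto intro!: finite_imp_compact_convex_hull finite_image_set intro: exI[of _ "0::nat"])

theorem corollary1:
  fixes x1 y1 x2 y2 \<theta> :: real
  shows "convex_on UNIV (\<lambda>t. areaf t y1 x2 y2 \<theta>)
       \<and> convex_on UNIV (\<lambda>t. areaf x1 t x2 y2 \<theta>)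
       \<and> convex_on UNIV (\<lambda>t. areaf x1 y1 t y2 \<theta>)
       \<and> convex_on UNIV (\<lambda>t. areaf x1 y1 x2 t \<theta>)"
proof (intro conjI)
  have FT: "compact (polygonF \<union> triT x2 y2 \<theta>)" "polygonF \<union> triT x2 y2 \<theta> \<noteq> {}"
    and FR: "compact (polygonF \<union> rectR x1 y1)" "polygonF \<union> rectR x1 y1 \<noteq> {}"
    by (simp_all add: compact_Un compact_polygonF compact_triT compact_rectR polygonF_nonempty)
  have "areaf t y1 x2 y2 \<theta> = measure lebesgue
      (convex hull ((polygonF \<union> triT x2 y2 \<theta>) \<union> (\<lambda>p. p + (t, 0)) ` rectR 0 y1))"
    and "areaf x1 t x2 y2 \<theta> = measure lebesgue
      (convex hull ((polygonF \<union> triT x2 y2 \<theta>) \<union> (\<lambda>p. p + (0, t)) ` rectR x1 0))"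
    and "areaf x1 y1 t y2 \<theta> = measure lebesgue
      (convex hull ((polygonF \<union> rectR x1 y1) \<union> (\<lambda>p. p + (t, 0)) ` triT 0 y2 \<theta>))"
    and "areaf x1 y1 x2 t \<theta> = measure lebesgue
      (convex hull ((polygonF \<union> rectR x1 y1) \<union> (\<lambda>p. p + (0, t)) ` triT x2 0 \<theta>))" for t
    using rectR_translate[of 0 t y1 0] rectR_translate[of x1 0 0 t]
      triT_translate[of 0 t y2 0 \<theta>] triT_translate[of x2 0 0 t \<theta>]
    by (simp_all add: areaf_def Un_ac)
  then show "convex_on UNIV (\<lambda>t. areaf t y1 x2 y2 \<theta>)" "convex_on UNIV (\<lambda>t. areaf x1 t x2 y2 \<theta>)"
    "convex_on UNIV (\<lambda>t. areaf x1 y1 t y2 \<theta>)" "convex_on UNIV (\<lambda>t. areaf x1 y1 x2 t \<theta>)"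
    using FT FR
    by (simp_all add: convex_on_measure_hull_Un_horizontal_shift convex_on_measure_hull_Un_vertical_shift
        compact_rectR rectR_nonempty compact_triT triT_nonempty)
qed

end
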